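(* Let $R$, $G$, $*$, $\sigma$ and $\mathcal{S}$ be as in the context, and suppose $\mathcal{S}$ is anticommutative. Let $x,y\in G\setminus G_*$. - (i) If $(x,y)=1$, then $c_x=c_y$ and $2(1+\sigma(xy))=0=2(\sigma(x)+\sigma(y))$. - (ii) If $(x,y)\neq 1$, then one of the following holds: - (a) $(x,y)=c_x=c_y=c_{xy}$ and $1+\sigma(x)+\sigma(y)+\sigma(xy)=0$; - (b) $(x,y)=c_x\neq c_y=c_{xy}$ and $\sigma(x)=-1$; - (c) $(x,y)=c_y\neq c_x=c_{xy}$ and $\sigma(y)=-1$; - (d) $(x,y)=c_{xy}\neq c_x=c_y$, $\sigma(xy)=-1$ and $\sigma(x)=-\sigma(y)$.
   Context: Throughout, $R$ is a commutative ring with unity with $\operatorname{char}(R)\neq 2$, and $\mathcal{U}(R)$ is its unit group. $G$ is a group with an involution $*$, i.e. a map $x\mapsto x^*$ with $(xy)^*=y^*x^*$ and $(x^* )^*=x$. The map $\sigma:G\to\mathcal{U}(R)$ is a nontrivial group homomorphism with kernel $N=\ker\sigma$, and it is compatible with $*$: $xx^*\in N$ for all $x\in G$. The group ring $RG$ carries the involution $\left(\sum_{x\in G}\alpha_x x\right)^{\sigma*}=\sum_{x\in G}\sigma(x)\alpha_x x^*$. Write $G_*=\{x\in G: x^*=x\}$ and $N_*=G_*\cap N$. Let $\mathcal{S}$ be the $R$-submodule of $RG$ spanned by the union of the following three sets: - $2\mathcal{S}_1=\{2x: x\in N_*\}$; - $\mathcal{S}_2=\{\alpha x: x\in G_*\setminus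 N,\ \alpha\in R,\ \alpha(1-\sigma(x))=0\}$; - $\mathcal{S}_3=\{x+\sigma(x)x^*: x\in G\setminus G_*\}$. $\mathcal{S}$ is called anticommutative if $ab+ba=0$ for all $a,b\in\mathcal{S}$. The commutator is $(x,y)=x^{-1}y^{-1}xy$, and for $a\in G$ we put $c_a=a^*a^{-1}$. *)

theory Defs
  imports "HOL-Algebra.Group"
begin

text \<open>Elements of the group ring RG are represented as functions 'g => 'r
 (finitely supported on carrier G for all elements we consider).\<close>

definition gdelta :: "'g \<Rightarrow> 'g \<Rightarrow> 'r::comm_ring_1" where
  "gdelta x = (\<lambda>z. if z = x then 1 else 0)"

definition gsmult :: "'r::comm_ring_1 \<Rightarrow> ('g \<Rightarrow> 'r) \<Rightarrow> 'g \<Rightarrow> 'r" where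
  "gsmult \<alpha> a = (\<lambda>z. \<alpha> * a z)"

definition gadd :: "('g \<Rightarrow> 'r::comm_ring_1) \<Rightarrow> ('g \<Rightarrow> 'r) \<Rightarrow> 'g \<Rightarrow> 'r" where
  "gadd a b = (\<lambda>z. a z + b z)"

definition gconv :: "('g, 'm) monoid_scheme \<Rightarrow> ('g \<Rightarrow> 'r::comm_ring_1) \<Rightarrow> ('g \<Rightarrow> 'r) \<Rightarrow> 'g \<Rightarrow> 'r" where
  "gconv G a b = (\<lambda>z. if z \<in> carrier G
       then (\<Sum>x\<in>{x \<in> carrier G. a x \<noteq> 0}. a x * b (inv\<^bsub>G\<^esub> x \<otimes>\<^bsub>G\<^esub> z)) else 0)"

text \<open>The generating set 2S_1 \<union> S_2 \<union> S_3.\<close>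
definition S_gens :: "('g, 'm) monoid_scheme \<Rightarrow> ('g \<Rightarrow> 'g) \<Rightarrow> ('g \<Rightarrow> 'r::comm_ring_1) \<Rightarrow> ('g \<Rightarrow> 'r) set" where
  "S_gens G star \<sigma> =
     {gsmult 2 (gdelta x) | x. x \<in> carrier G \<and> star x = x \<and> \<sigma> x = 1}
   \<union> {gsmult \<alpha> (gdelta x) | x \<alpha>. x \<in> carrier G \<and> star x = x \<and> \<sigma> x \<noteq> 1 \<and> \<alpha> * (1 - \<sigma> x) = 0}
   \<union> {gadd (gdelta x) (gsmult (\<sigma> x) (gdelta (star x))) | x. x \<in> carrier G \<and> star x \<noteq> x}"

inductive_set rspan :: "('g \<Rightarrow> 'r::comm_ring_1) set \<Rightarrow> ('g \<Rightarrow> 'r) set" for A where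
  zero: "(\<lambda>z. 0) \<in> rspan A"
| gen: "a \<in> A \<Longrightarrow> a \<in> rspan A"
| add: "a \<in> rspan A \<Longrightarrow> b \<in> rspan A \<Longrightarrow> gadd a b \<in> rspan A"
| smult: "a \<in> rspan A \<Longrightarrow> gsmult \<alpha> a \<in> rspan A"

definition S_set :: "('g, 'm) monoid_scheme \<Rightarrow> ('g \<Rightarrow> 'g) \<Rightarrow> ('g \<Rightarrow> 'r::comm_ring_1) \<Rightarrow> ('g \<Rightarrow> 'r) set" where
  "S_set G star \<sigma> = rspan (S_gens G star \<sigma>)"

definition S_anticomm :: "('g, 'm) monoid_scheme \<Rightarrow> ('g \<Rightarrow> 'g) \<Rightarrow> ('g \<Rightarrow> 'r::comm_ring_1) \<Rightarrow> bool" where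
  "S_anticomm G star \<sigma> \<longleftrightarrow>
     (\<forall>a\<in>S_set G star \<sigma>. \<forall>b\<in>S_set G star \<sigma>. gadd (gconv G a b) (gconv G b a) = (\<lambda>z. 0))"

definition gcomm :: "('g, 'm) monoid_scheme \<Rightarrow> 'g \<Rightarrow> 'g \<Rightarrow> 'g" where
  "gcomm G x y = inv\<^bsub>G\<^esub> x \<otimes>\<^bsub>G\<^esub> inv\<^bsub>G\<^esub> y \<otimes>\<^bsub>G\<^esub> x \<otimes>\<^bsub>G\<^esub> y"

definition cstar :: "('g, 'm) monoid_scheme \<Rightarrow> ('g \<Rightarrow> 'g) \<Rightarrow> 'g \<Rightarrow> 'g" where
  "cstar G star a = star a \<otimes>\<^bsub>G\<^esub> inv\<^bsub>G\<^esub> a"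

end

theory Submission
  imports Defs
begin

text \<open>
  Write \<open>c\<^sub>x = x\<^sup>* x\<^sup>-\<^sup>1\<close>. For \<open>x \<notin> G\<^sub>*\<close>, anticommutativity of \<open>x + \<sigma>(x) x\<^sup>*\<close> with
  itself forces \<open>x x\<^sup>* = x\<^sup>* x\<close> and \<open>x\<^sup>2 = (x\<^sup>*)\<^sup>2\<close>, so \<open>c\<^sub>x\<close> is an involution commuting
  with \<open>x\<close> and \<open>x\<^sup>* = c\<^sub>x x\<close>. For two such \<open>x, y\<close> the anticommutator of \<open>x + \<sigma>(x) x\<^sup>*\<close> and
  \<open>y + \<sigma>(y) y\<^sup>*\<close> is supported on the eight elements \<open>xy, xy c\<^sub>y, c\<^sub>x xy, c\<^sub>x xy c\<^sub>y,
  yx, yx c\<^sub>x, c\<^sub>y yx, c\<^sub>y yx c\<^sub>x\<close>. As the values of \<open>\<sigma>\<close> are units and \<open>2 \<noteq> 0\<close>, the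
  vanishing of its coefficients forces coincidences among these elements, and the possible
  patterns of coincidences are the alternatives of the theorem. Two further patterns are
  excluded by anticommuting \<open>y + \<sigma>(y) y\<^sup>*\<close> with \<open>2g\<close> for a symmetric \<open>g\<close>: \<open>g = xy\<close>
  when \<open>xy\<close> is symmetric (then \<open>2xy \<in> S\<^sub>2\<close>, since already \<open>2\<cdot>1 \<in> S\<^sub>1\<close> gives \<open>4 = 0\<close>),
  and \<open>g = x x\<^sup>*\<close>.
\<close>

lemma unit_double_neq_zero:
  fixes u :: "'r::comm_ring_1"
  assumes "(2::'r) \<noteq> 0" and "u dvd 1"
  shows "u + u \<noteq> 0"
proof
  assume "u + u = 0"
  obtain v where "1 = u * v" using assms(2) by (rule dvdE)
  then have "2 = (u + u) * v" by (metis distrib_right one_add_one)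
  then show False using \<open>u + u = 0\<close> assms(1) by simp
qed

lemma (in group) gcomm_eq_iff:
  assumes "x \<in> carrier G" "y \<in> carrier G" "r \<in> carrier G"
  shows "gcomm G x y = r \<longleftrightarrow> x \<otimes> y = y \<otimes> x \<otimes> r"
proof -
  have "gcomm G x y = inv (y \<otimes> x) \<otimes> (x \<otimes> y)"
    using assms by (simp add: gcomm_def inv_mult_group m_assoc)
  then show ?thesis
    using assms by (simp add: inv_solve_left')
qed

lemma (in group) mult_involution_eq_one_iff:
  assumes "a \<in> carrier G" "b \<in> carrier G" "b \<otimes> b = \<one>"
  shows "a \<otimes> b = \<one> \<longleftrightarrow> a = b"
  using assms by (metis inv_equality inv_unique')

locale anticommutative_S = group G for G :: "('g, 'm) monoid_scheme" (structure) +
  fixes star :: "'g \<Rightarrow> 'g" and \<sigma> :: "'g \<Rightarrow> 'r::comm_ring_1"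
  assumes star_closed: "a \<in> carrier G \<Longrightarrow> star a \<in> carrier G"
    and star_mult: "a \<in> carrier G \<Longrightarrow> b \<in> carrier G \<Longrightarrow> star (a \<otimes> b) = star b \<otimes> star a"
    and star_star: "a \<in> carrier G \<Longrightarrow> star (star a) = a"
    and \<sigma>_unit: "a \<in> carrier G \<Longrightarrow> \<sigma> a dvd 1"
    and \<sigma>_mult: "a \<in> carrier G \<Longrightarrow> b \<in> carrier G \<Longrightarrow> \<sigma> (a \<otimes> b) = \<sigma> a * \<sigma> b"
    and \<sigma>_nontrivial: "\<exists>a\<in>carrier G. \<sigma> a \<noteq> 1"
    and \<sigma>_mult_star: "a \<in> carrier G \<Longrightarrow> \<sigma> (a \<otimes> star a) = 1"
    and char_neq_2: "CHAR('r) \<noteq> 2"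
    and S_anticomm: "S_anticomm G star \<sigma>"
begin

lemma one_neq_zero: "(1::'r) \<noteq> 0"
  using \<sigma>_nontrivial by (metis mult_1_right mult_zero_right)

lemma two_neq_zero: "(2::'r) \<noteq> 0"
proof
  assume "(2::'r) = 0"
  then have "CHAR('r) dvd 2" using of_nat_eq_0_iff_char_dvd[where 'a='r, of 2] by simp
  moreover have "CHAR('r) \<noteq> 1" using one_neq_zero of_nat_CHAR[where 'a='r] by auto
  moreover have "CHAR('r) \<noteq> 0" using \<open>CHAR('r) dvd 2\<close> by (intro notI) simp
  ultimately show False using char_neq_2 dvd_imp_le[of "CHAR('r)" 2] by linarith
qed

lemma \<sigma>_neq_zero: "a \<in> carrier G \<Longrightarrow> \<sigma> a \<noteq> 0"
  using \<sigma>_unit one_neq_zero by fastforce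

lemma \<sigma>_double_neq_zero: "a \<in> carrier G \<Longrightarrow> \<sigma> a + \<sigma> a \<noteq> 0"
  using unit_double_neq_zero[OF two_neq_zero \<sigma>_unit] .

lemma star_one: "star \<one> = \<one>"
  using star_mult[of \<one> \<one>] star_closed[of \<one>] by simp

lemma \<sigma>_one: "\<sigma> \<one> = 1"
  using \<sigma>_mult_star[of \<one>] by (simp add: star_one)

definition S3_gen :: "'g \<Rightarrow> 'g \<Rightarrow> 'r" where
  "S3_gen p = gadd (gdelta p) (gsmult (\<sigma> p) (gdelta (star p)))"

definition double_delta :: "'g \<Rightarrow> 'g \<Rightarrow> 'r" where
  "double_delta g = gsmult 2 (gdelta g)"

lemma S3_gen_in_S_set: "p \<in> carrier G \<Longrightarrow> star p \<noteq> p \<Longrightarrow> S3_gen p \<in> S_set G star \<sigma>"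
  unfolding S_set_def S3_gen_def by (rule rspan.gen) (auto simp: S_gens_def)

lemma double_delta_in_S_set:
  assumes "g \<in> carrier G" "star g = g" "2 * (1 - \<sigma> g) = 0"
  shows "double_delta g \<in> S_set G star \<sigma>"
proof -
  have "double_delta g \<in> S_gens G star \<sigma>"
    using assms unfolding S_gens_def double_delta_def by (cases "\<sigma> g = 1") blast+
  then show ?thesis unfolding S_set_def by (rule rspan.gen)
qed

lemma double_delta_mult_star_in_S_set:
  assumes "p \<in> carrier G"
  shows "double_delta (p \<otimes> star p) \<in> S_set G star \<sigma>"
  using assms star_closed by (intro double_delta_in_S_set) (simp_all add: star_mult star_star \<sigma>_mult_star)

lemma gconv_eq_sum_over_support:
  assumes "finite A" "A \<subseteq> carrier G" "\<And>g. g \<notin> A \<Longrightarrow> f g = 0" "z \<in> carrier G"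
  shows "gconv G f h z = (\<Sum>g\<in>A. f g * h (inv g \<otimes> z))"
  unfolding gconv_def using assms by (auto intro!: sum.mono_neutral_left)

lemma gconv_S3_gen_S3_gen:
  assumes p: "p \<in> carrier G" "star p \<noteq> p" and q: "q \<in> carrier G" and z: "z \<in> carrier G"
  shows "gconv G (S3_gen p) (S3_gen q) z =
      (if z = p \<otimes> q then 1 else 0) + (if z = p \<otimes> star q then \<sigma> q else 0)
    + (if z = star p \<otimes> q then \<sigma> p else 0) + (if z = star p \<otimes> star q then \<sigma> p * \<sigma> q else 0)"
proof -
  have "gconv G (S3_gen p) (S3_gen q) z =
      (\<Sum>g\<in>{p, star p}. S3_gen p g * S3_gen q (inv g \<otimes> z))"
    using p z star_closed by (intro gconv_eq_sum_over_support) (auto simp: S3_gen_def gadd_def gsmult_def gdelta_def)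
  then show ?thesis
    using p q z star_closed
    by (simp add: S3_gen_def gadd_def gsmult_def gdelta_def inv_solve_left' algebra_simps)
qed

lemma gconv_double_delta_S3_gen:
  assumes g: "g \<in> carrier G" and q: "q \<in> carrier G" and z: "z \<in> carrier G"
  shows "gconv G (double_delta g) (S3_gen q) z =
      (if z = g \<otimes> q then 2 else 0) + (if z = g \<otimes> star q then 2 * \<sigma> q else 0)"
proof -
  have "gconv G (double_delta g) (S3_gen q) z = (\<Sum>h\<in>{g}. double_delta g h * S3_gen q (inv h \<otimes> z))"
    using g z by (intro gconv_eq_sum_over_support) (auto simp: double_delta_def gsmult_def gdelta_def)
  then show ?thesis
    using g q z star_closed
    by (simp add: double_delta_def S3_gen_def gadd_def gsmult_def gdelta_def inv_solve_left')
qed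

lemma gconv_S3_gen_double_delta:
  assumes g: "g \<in> carrier G" and p: "p \<in> carrier G" "star p \<noteq> p" and z: "z \<in> carrier G"
  shows "gconv G (S3_gen p) (double_delta g) z =
      (if z = p \<otimes> g then 2 else 0) + (if z = star p \<otimes> g then 2 * \<sigma> p else 0)"
proof -
  have "gconv G (S3_gen p) (double_delta g) z =
      (\<Sum>h\<in>{p, star p}. S3_gen p h * double_delta g (inv h \<otimes> z))"
    using p z star_closed by (intro gconv_eq_sum_over_support) (auto simp: S3_gen_def gadd_def gsmult_def gdelta_def)
  then show ?thesis
    using g p z star_closed
    by (simp add: double_delta_def S3_gen_def gadd_def gsmult_def gdelta_def inv_solve_left' algebra_simps)
qed

lemma S_set_anticomm_at:
  "f \<in> S_set G star \<sigma> \<Longrightarrow> h \<in> S_set G star \<sigma> \<Longrightarrow> gconv G f h z + gconv G h f z = 0"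
  using S_anticomm unfolding S_anticomm_def gadd_def by metis

lemma S3_gen_anticomm_at:
  assumes p: "p \<in> carrier G" "star p \<noteq> p" and q: "q \<in> carrier G" "star q \<noteq> q" and z: "z \<in> carrier G"
  shows "(if z = p \<otimes> q then 1 else 0) + (if z = p \<otimes> star q then \<sigma> q else 0)
     + (if z = star p \<otimes> q then \<sigma> p else 0) + (if z = star p \<otimes> star q then \<sigma> p * \<sigma> q else 0)
     + (if z = q \<otimes> p then 1 else 0) + (if z = q \<otimes> star p then \<sigma> p else 0)
     + (if z = star q \<otimes> p then \<sigma> q else 0) + (if z = star q \<otimes> star p then \<sigma> q * \<sigma> p else 0) = 0"
  using S_set_anticomm_at[OF S3_gen_in_S_set[OF p] S3_gen_in_S_set[OF q], of z]
  by (simp add: gconv_S3_gen_S3_gen[OF p q(1) z] gconv_S3_gen_S3_gen[OF q p(1) z] add.assoc)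

lemma double_delta_anticomm_at:
  assumes g: "g \<in> carrier G" "double_delta g \<in> S_set G star \<sigma>"
    and p: "p \<in> carrier G" "star p \<noteq> p" and z: "z \<in> carrier G"
  shows "(if z = g \<otimes> p then 2 else 0) + (if z = g \<otimes> star p then 2 * \<sigma> p else 0)
     + (if z = p \<otimes> g then 2 else 0) + (if z = star p \<otimes> g then 2 * \<sigma> p else 0) = 0"
  using S_set_anticomm_at[OF g(2) S3_gen_in_S_set[OF p], of z]
  by (simp add: gconv_double_delta_S3_gen[OF g(1) p(1) z] gconv_S3_gen_double_delta[OF g(1) p z] add.assoc)

lemma four_eq_zero:
  assumes "p \<in> carrier G" "star p \<noteq> p"
  shows "(4::'r) = 0"
proof -
  have "double_delta \<one> \<in> S_set G star \<sigma>"
    by (rule double_delta_in_S_set) (simp_all add: star_one \<sigma>_one)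
  from double_delta_anticomm_at[OF one_closed this assms assms(1)]
  show ?thesis using assms star_closed by simp
qed

lemma nonsym_commutes_star:
  assumes p: "p \<in> carrier G" "star p \<noteq> p"
  shows "p \<otimes> star p = star p \<otimes> p"
proof (rule ccontr)
  assume "p \<otimes> star p \<noteq> star p \<otimes> p"
  then have "\<sigma> p + \<sigma> p = 0"
    using S3_gen_anticomm_at[OF p p, of "p \<otimes> star p"] p star_closed[OF p(1)] by simp
  then show False using \<sigma>_double_neq_zero[OF p(1)] by simp
qed

lemma nonsym_square_eq_star_square:
  assumes p: "p \<in> carrier G" "star p \<noteq> p"
  shows "p \<otimes> p = star p \<otimes> star p"
proof (rule ccontr)
  assume "p \<otimes> p \<noteq> star p \<otimes> star p"
  then have "(1::'r) + 1 = 0"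
    using S3_gen_anticomm_at[OF p p, of "p \<otimes> p"] p star_closed[OF p(1)] by simp
  then show False using two_neq_zero by simp
qed

lemma cstar_closed: "p \<in> carrier G \<Longrightarrow> cstar G star p \<in> carrier G"
  by (simp add: cstar_def star_closed)

lemma star_eq_cstar_mult: "p \<in> carrier G \<Longrightarrow> star p = cstar G star p \<otimes> p"
  by (simp add: cstar_def star_closed m_assoc)

lemma cstar_eq_iff: "p \<in> carrier G \<Longrightarrow> r \<in> carrier G \<Longrightarrow> cstar G star p = r \<longleftrightarrow> star p = r \<otimes> p"
  using star_eq_cstar_mult cstar_closed by force

lemma cstar_commutes:
  assumes "p \<in> carrier G" "star p \<noteq> p"
  shows "cstar G star p \<otimes> p = p \<otimes> cstar G star p"
proof -
  have "p \<otimes> cstar G star p = p \<otimes> star p \<otimes> inv p"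
    using assms(1) star_closed[OF assms(1)] by (simp add: cstar_def m_assoc)
  also have "\<dots> = star p"
    using nonsym_commutes_star[OF assms] assms(1) star_closed[OF assms(1)] by (simp add: m_assoc)
  finally show ?thesis using star_eq_cstar_mult[OF assms(1)] by simp
qed

lemma cstar_square:
  assumes p: "p \<in> carrier G" "star p \<noteq> p"
  shows "cstar G star p \<otimes> cstar G star p = \<one>"
proof -
  let ?c = "cstar G star p"
  have "?c \<otimes> ?c \<otimes> (p \<otimes> p) = ?c \<otimes> (?c \<otimes> p) \<otimes> p"
    using p(1) cstar_closed[OF p(1)] by (simp add: m_assoc)
  also have "\<dots> = ?c \<otimes> (p \<otimes> ?c) \<otimes> p"
    using cstar_commutes[OF p] by simp
  also have "\<dots> = (?c \<otimes> p) \<otimes> (?c \<otimes> p)"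
    using p(1) cstar_closed[OF p(1)] by (simp add: m_assoc)
  also have "\<dots> = p \<otimes> p"
    using nonsym_square_eq_star_square[OF p] star_eq_cstar_mult[OF p(1)] by simp
  finally show ?thesis using p(1) cstar_closed[OF p(1)] by simp
qed

lemma cstar_neq_one: "p \<in> carrier G \<Longrightarrow> star p \<noteq> p \<Longrightarrow> cstar G star p \<noteq> \<one>"
  using star_eq_cstar_mult by force

end

locale nonsymmetric_pair = anticommutative_S G star \<sigma>
  for G :: "('g, 'm) monoid_scheme" (structure)
    and star :: "'g \<Rightarrow> 'g" and \<sigma> :: "'g \<Rightarrow> 'r::comm_ring_1" +
  fixes x y :: 'g
  assumes x_closed [simp]: "x \<in> carrier G" and x_nonsym: "star x \<noteq> x"
    and y_closed [simp]: "y \<in> carrier G" and y_nonsym: "star y \<noteq> y"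
begin

abbreviation "cx \<equiv> cstar G star x"
abbreviation "cy \<equiv> cstar G star y"

lemma cx_closed [simp]: "cx \<in> carrier G" and cy_closed [simp]: "cy \<in> carrier G"
  by (simp_all add: cstar_closed)

lemma cx_neq_one [simp]: "cx \<noteq> \<one>" and cy_neq_one [simp]: "cy \<noteq> \<one>"
  using cstar_neq_one x_nonsym y_nonsym by simp_all

lemmas cx_commutes = cstar_commutes[OF x_closed x_nonsym]
  and cy_commutes = cstar_commutes[OF y_closed y_nonsym]
  and cx_square = cstar_square[OF x_closed x_nonsym]
  and cy_square = cstar_square[OF y_closed y_nonsym]

lemma cx_commutes_left: "r \<in> carrier G \<Longrightarrow> cx \<otimes> (x \<otimes> r) = x \<otimes> (cx \<otimes> r)"
  by (simp add: cx_commutes flip: m_assoc)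

lemma cy_commutes_left: "r \<in> carrier G \<Longrightarrow> cy \<otimes> (y \<otimes> r) = y \<otimes> (cy \<otimes> r)"
  by (simp add: cy_commutes flip: m_assoc)

lemma cx_square_left: "r \<in> carrier G \<Longrightarrow> cx \<otimes> (cx \<otimes> r) = r"
  by (simp add: cx_square flip: m_assoc)

text \<open>The coefficient at \<open>z\<close> of the anticommutator of \<open>x + \<sigma>(x) x\<^sup>*\<close> and \<open>y + \<sigma>(y) y\<^sup>*\<close>,
  with \<open>x\<^sup>* = c\<^sub>x x\<close> and \<open>y\<^sup>* = c\<^sub>y y\<close> substituted.\<close>

lemma coefficient_relation:
  assumes "z \<in> carrier G"
  shows "(if z = x \<otimes> y then 1 else 0) + (if z = x \<otimes> y \<otimes> cy then \<sigma> y else 0)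
     + (if z = cx \<otimes> (x \<otimes> y) then \<sigma> x else 0) + (if z = cx \<otimes> (x \<otimes> y) \<otimes> cy then \<sigma> x * \<sigma> y else 0)
     + (if z = y \<otimes> x then 1 else 0) + (if z = y \<otimes> x \<otimes> cx then \<sigma> x else 0)
     + (if z = cy \<otimes> (y \<otimes> x) then \<sigma> y else 0) + (if z = cy \<otimes> (y \<otimes> x) \<otimes> cx then \<sigma> x * \<sigma> y else 0) = 0"
proof -
  have "x \<otimes> star y = x \<otimes> y \<otimes> cy" "star x \<otimes> y = cx \<otimes> (x \<otimes> y)"
    "star x \<otimes> star y = cx \<otimes> (x \<otimes> y) \<otimes> cy"
    using cy_commutes by (simp_all add: star_eq_cstar_mult m_assoc)
  moreover have "y \<otimes> star x = y \<otimes> x \<otimes> cx" "star y \<otimes> x = cy \<otimes> (y \<otimes> x)"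
    "star y \<otimes> star x = cy \<otimes> (y \<otimes> x) \<otimes> cx"
    using cx_commutes by (simp_all add: star_eq_cstar_mult m_assoc)
  ultimately show ?thesis
    using S3_gen_anticomm_at[OF x_closed x_nonsym y_closed y_nonsym assms]
    by (simp only: mult.commute[of "\<sigma> y"])
qed

lemma cx_mult_cy_eq_one_iff: "cx \<otimes> cy = \<one> \<longleftrightarrow> cx = cy"
  using mult_involution_eq_one_iff[OF cx_closed cy_closed cy_square] .

lemma cy_mult_cx_eq_one_iff: "cy \<otimes> cx = \<one> \<longleftrightarrow> cx = cy"
  using mult_involution_eq_one_iff[OF cy_closed cx_closed cx_square] by auto

lemma xy_eq_twisted_iff: "x \<otimes> y = cx \<otimes> (x \<otimes> y) \<otimes> cy \<longleftrightarrow> cx = cy"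
proof -
  have "cx \<otimes> (x \<otimes> y) \<otimes> cy = x \<otimes> (cx \<otimes> cy) \<otimes> y"
    by (simp add: m_assoc cx_commutes cy_commutes cx_commutes_left cy_commutes_left)
  moreover have "x \<otimes> y = x \<otimes> (cx \<otimes> cy) \<otimes> y \<longleftrightarrow> cx \<otimes> cy = \<one>"
    by simp
  ultimately show ?thesis using cx_mult_cy_eq_one_iff by simp
qed

lemma yx_eq_twisted_iff: "y \<otimes> x = cy \<otimes> (y \<otimes> x) \<otimes> cx \<longleftrightarrow> cx = cy"
proof -
  have "cy \<otimes> (y \<otimes> x) \<otimes> cx = y \<otimes> (cy \<otimes> cx) \<otimes> x"
    by (simp add: m_assoc cx_commutes cy_commutes cx_commutes_left cy_commutes_left)
  moreover have "y \<otimes> x = y \<otimes> (cy \<otimes> cx) \<otimes> x \<longleftrightarrow> cy \<otimes> cx = \<one>"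
    by simp
  ultimately show ?thesis using cy_mult_cx_eq_one_iff by simp
qed

lemma xy_cy_eq_cx_xy_iff: "x \<otimes> y \<otimes> cy = cx \<otimes> (x \<otimes> y) \<longleftrightarrow> cx = cy"
proof -
  have "x \<otimes> y \<otimes> cy = x \<otimes> cy \<otimes> y" "cx \<otimes> (x \<otimes> y) = x \<otimes> cx \<otimes> y"
    by (simp_all add: m_assoc cx_commutes cy_commutes cx_commutes_left cy_commutes_left)
  then show ?thesis by auto
qed

lemma yx_cx_eq_cy_yx_iff: "y \<otimes> x \<otimes> cx = cy \<otimes> (y \<otimes> x) \<longleftrightarrow> cx = cy"
proof -
  have "y \<otimes> x \<otimes> cx = y \<otimes> cx \<otimes> x" "cy \<otimes> (y \<otimes> x) = y \<otimes> cy \<otimes> x"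
    by (simp_all add: m_assoc cx_commutes cy_commutes cx_commutes_left cy_commutes_left)
  then show ?thesis by auto
qed

lemma star_xy: "star (x \<otimes> y) = cy \<otimes> (y \<otimes> x) \<otimes> cx"
  using cx_commutes
  by (simp add: star_mult star_eq_cstar_mult[OF x_closed] star_eq_cstar_mult[OF y_closed] m_assoc)

lemma \<sigma>_xy: "\<sigma> (x \<otimes> y) = \<sigma> x * \<sigma> y"
  by (simp add: \<sigma>_mult)

lemma commuting_case:
  assumes comm: "x \<otimes> y = y \<otimes> x"
  shows "cx = cy" "2 * (1 + \<sigma> (x \<otimes> y)) = 0" "2 * (\<sigma> x + \<sigma> y) = 0"
proof -
  note rel = coefficient_relation[unfolded comm[symmetric]]
  have "x \<otimes> y = cy \<otimes> (x \<otimes> y) \<otimes> cx \<longleftrightarrow> cx = cy"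
    using yx_eq_twisted_iff by (simp add: comm)
  then have at_xy: "1 + (if cx = cy then \<sigma> x * \<sigma> y else 0) + 1 + (if cx = cy then \<sigma> x * \<sigma> y else 0) = 0"
    using rel[of "x \<otimes> y"] xy_eq_twisted_iff by simp
  show "cx = cy"
  proof (rule ccontr)
    assume "cx \<noteq> cy"
    then show False using at_xy two_neq_zero by simp
  qed
  then show "2 * (1 + \<sigma> (x \<otimes> y)) = 0"
    using at_xy by (simp add: \<sigma>_xy algebra_simps)
  have "x \<otimes> y \<otimes> cy = cx \<otimes> (x \<otimes> y)" "x \<otimes> y \<otimes> cy = x \<otimes> y \<otimes> cx" "x \<otimes> y \<otimes> cy = cy \<otimes> (x \<otimes> y)"
    using xy_cy_eq_cx_xy_iff yx_cx_eq_cy_yx_iff \<open>cx = cy\<close> by (simp_all add: comm)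
  then have "\<sigma> y + \<sigma> x + \<sigma> x + \<sigma> y = 0"
    using rel[of "x \<otimes> y \<otimes> cy"] by simp
  then show "2 * (\<sigma> x + \<sigma> y) = 0"
    by (simp add: algebra_simps)
qed

lemma commutator_eq_cstar_xy:
  assumes nc: "x \<otimes> y \<noteq> y \<otimes> x" and eq: "cx = cy"
  shows "gcomm G x y = cstar G star (x \<otimes> y)"
proof -
  let ?c = "cstar G star (x \<otimes> y)"
  have star_xy_eq: "star (x \<otimes> y) = y \<otimes> x"
    using yx_eq_twisted_iff eq by (simp add: star_xy)
  then have xy_nonsym: "star (x \<otimes> y) \<noteq> x \<otimes> y"
    using nc by simp
  have "y \<otimes> x \<otimes> ?c = ?c \<otimes> (x \<otimes> y) \<otimes> ?c"
    using star_xy_eq star_eq_cstar_mult[of "x \<otimes> y"] by simp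
  also have "\<dots> = x \<otimes> y"
    using cstar_commutes[OF _ xy_nonsym] cstar_square[OF _ xy_nonsym] cstar_closed[of "x \<otimes> y"]
    by (simp add: m_assoc)
  finally show ?thesis
    using cstar_closed[of "x \<otimes> y"] by (simp add: gcomm_eq_iff)
qed

lemma noncommuting_equal_cstar_case:
  assumes nc: "x \<otimes> y \<noteq> y \<otimes> x" and eq: "cx = cy"
  shows "(gcomm G x y = cx \<and> cx = cy \<and> cy = cstar G star (x \<otimes> y)
            \<and> 1 + \<sigma> x + \<sigma> y + \<sigma> (x \<otimes> y) = 0)
       \<or> (gcomm G x y = cstar G star (x \<otimes> y) \<and> cstar G star (x \<otimes> y) \<noteq> cx \<and> cx = cy
            \<and> \<sigma> (x \<otimes> y) = -1 \<and> \<sigma> x = - \<sigma> y)"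
proof -
  have twisted: "cx \<otimes> (x \<otimes> y) \<otimes> cy = x \<otimes> y" "cy \<otimes> (y \<otimes> x) \<otimes> cx = y \<otimes> x"
    using xy_eq_twisted_iff yx_eq_twisted_iff eq by simp_all
  note comm_eq = commutator_eq_cstar_xy[OF nc eq]
  have "cy \<otimes> (y \<otimes> x) = y \<otimes> x \<otimes> cx"
    using yx_cx_eq_cy_yx_iff eq by simp
  then have at_xy: "1 + \<sigma> x * \<sigma> y + (if x \<otimes> y = y \<otimes> x \<otimes> cx then \<sigma> x + \<sigma> y else 0) = 0"
    using coefficient_relation[of "x \<otimes> y"] twisted nc
    by (cases "x \<otimes> y = y \<otimes> x \<otimes> cx") (simp_all add: algebra_simps)
  show ?thesis
  proof (cases "x \<otimes> y = y \<otimes> x \<otimes> cx")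
    case True
    then have "gcomm G x y = cx"
      by (simp add: gcomm_eq_iff)
    moreover have "1 + \<sigma> x * \<sigma> y + (\<sigma> x + \<sigma> y) = 0"
      using at_xy True by simp
    ultimately show ?thesis
      using comm_eq eq by (simp add: \<sigma>_xy algebra_simps)
  next
    case False
    then have "gcomm G x y \<noteq> cx"
      by (simp add: gcomm_eq_iff)
    from False have \<sigma>_prod: "1 + \<sigma> x * \<sigma> y = 0"
      using at_xy by simp
    have "x \<otimes> y \<otimes> cy = cx \<otimes> (x \<otimes> y)"
      using xy_cy_eq_cx_xy_iff eq by simp
    moreover have "x \<otimes> y \<otimes> cy \<noteq> y \<otimes> x \<otimes> cx" "x \<otimes> y \<otimes> cy \<noteq> cy \<otimes> (y \<otimes> x)"
      using nc eq \<open>cy \<otimes> (y \<otimes> x) = y \<otimes> x \<otimes> cx\<close> by simp_all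
    ultimately have "\<sigma> x + \<sigma> y + (if x \<otimes> y \<otimes> cy = y \<otimes> x then 1 + \<sigma> x * \<sigma> y else 0) = 0"
      using coefficient_relation[of "x \<otimes> y \<otimes> cy"] twisted(2)
      by (cases "x \<otimes> y \<otimes> cy = y \<otimes> x") (simp_all add: algebra_simps)
    then have "\<sigma> x = - \<sigma> y"
      using \<sigma>_prod by (simp add: eq_neg_iff_add_eq_0 split: if_split_asm)
    then show ?thesis
      using \<open>gcomm G x y \<noteq> cx\<close> comm_eq eq \<sigma>_prod
      by (simp add: \<sigma>_xy eq_neg_iff_add_eq_0 add.commute)
  qed
qed

lemma coefficient_at_xy_distinct_cstar:
  assumes nc: "x \<otimes> y \<noteq> y \<otimes> x" and ne: "cx \<noteq> cy"
  shows "1 + (if x \<otimes> y = y \<otimes> x \<otimes> cx then \<sigma> x else 0) + (if x \<otimes> y = cy \<otimes> (y \<otimes> x) then \<sigma> y else 0)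
     + (if x \<otimes> y = cy \<otimes> (y \<otimes> x) \<otimes> cx then \<sigma> x * \<sigma> y else 0) = 0"
  using coefficient_relation[of "x \<otimes> y"] xy_eq_twisted_iff ne nc by (simp add: algebra_simps)

lemma xy_not_symmetric:
  assumes nc: "x \<otimes> y \<noteq> y \<otimes> x" and ne: "cx \<noteq> cy"
  shows "star (x \<otimes> y) \<noteq> x \<otimes> y"
proof
  assume sym: "star (x \<otimes> y) = x \<otimes> y"
  then have twisted: "x \<otimes> y = cy \<otimes> (y \<otimes> x) \<otimes> cx"
    by (simp add: star_xy)
  have "y \<otimes> x \<otimes> cx \<noteq> cy \<otimes> (y \<otimes> x) \<otimes> cx" "cy \<otimes> (y \<otimes> x) \<noteq> cy \<otimes> (y \<otimes> x) \<otimes> cx"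
    by simp_all
  then have "1 + \<sigma> x * \<sigma> y = 0"
    using coefficient_at_xy_distinct_cstar[OF nc ne] twisted by simp
  then have "\<sigma> (x \<otimes> y) = -1"
    by (simp add: \<sigma>_xy eq_neg_iff_add_eq_0 add.commute)
  then have "2 * (1 - \<sigma> (x \<otimes> y)) = 4"
    by simp
  then have "double_delta (x \<otimes> y) \<in> S_set G star \<sigma>"
    using sym four_eq_zero[OF x_closed x_nonsym] by (intro double_delta_in_S_set) simp_all
  moreover have "x \<otimes> y \<otimes> y \<noteq> y \<otimes> (x \<otimes> y)"
    using nc by (simp flip: m_assoc)
  moreover have "x \<otimes> y \<otimes> y \<noteq> star y \<otimes> (x \<otimes> y)"
  proof
    assume "x \<otimes> y \<otimes> y = star y \<otimes> (x \<otimes> y)"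
    then have "x \<otimes> y = cy \<otimes> (y \<otimes> x)"
      by (simp add: star_eq_cstar_mult[of y] flip: m_assoc)
    then show False
      using twisted by simp
  qed
  ultimately have "(2::'r) = 0"
    using double_delta_anticomm_at[of "x \<otimes> y" y "x \<otimes> y \<otimes> y"] y_nonsym star_closed[of y]
    by (simp add: star_eq_cstar_mult[of y])
  then show False
    using two_neq_zero by simp
qed

lemma commutator_eq_cx_case:
  assumes nc: "x \<otimes> y \<noteq> y \<otimes> x" and ne: "cx \<noteq> cy" and hb: "x \<otimes> y = y \<otimes> x \<otimes> cx"
  shows "gcomm G x y = cx \<and> cx \<noteq> cy \<and> cy = cstar G star (x \<otimes> y) \<and> \<sigma> x = -1"
proof -
  have "star (x \<otimes> y) = cy \<otimes> (x \<otimes> y)"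
    unfolding star_xy using hb by (simp add: m_assoc)
  then have "cstar G star (x \<otimes> y) = cy"
    by (simp add: cstar_eq_iff)
  moreover have "x \<otimes> y \<noteq> cy \<otimes> (y \<otimes> x)"
    using yx_cx_eq_cy_yx_iff ne hb by simp
  then have "1 + \<sigma> x = 0"
    using coefficient_at_xy_distinct_cstar[OF nc ne] hb by simp
  ultimately show ?thesis
    using hb ne by (simp add: gcomm_eq_iff eq_neg_iff_add_eq_0 add.commute)
qed

lemma star_xy_eq_cx_xy:
  assumes ne: "cx \<noteq> cy" and hc: "x \<otimes> y = cy \<otimes> (y \<otimes> x)"
  shows "star (x \<otimes> y) = cx \<otimes> (x \<otimes> y)"
proof (rule ccontr)
  let ?s = "cy \<otimes> (y \<otimes> x) \<otimes> cx"
  assume "star (x \<otimes> y) \<noteq> cx \<otimes> (x \<otimes> y)"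
  then have "?s \<noteq> cx \<otimes> (x \<otimes> y)"
    by (simp add: star_xy)
  moreover have "?s \<noteq> y \<otimes> x"
    using yx_eq_twisted_iff ne by auto
  ultimately have "\<sigma> x * \<sigma> y + (if ?s = cx \<otimes> (x \<otimes> y) \<otimes> cy then \<sigma> x * \<sigma> y else 0) = 0"
    using coefficient_relation[of ?s] hc ne by (simp add: algebra_simps)
  then show False
    using \<sigma>_neq_zero[of "x \<otimes> y"] \<sigma>_double_neq_zero[of "x \<otimes> y"]
    by (auto simp: \<sigma>_xy split: if_split_asm)
qed

lemma yx_cx_eq_xy_cy:
  assumes ne: "cx \<noteq> cy" and hc: "x \<otimes> y = cy \<otimes> (y \<otimes> x)" and tw: "y \<otimes> x = cx \<otimes> (x \<otimes> y) \<otimes> cy"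
  shows "y \<otimes> x \<otimes> cx = x \<otimes> y \<otimes> cy"
proof -
  have "y \<otimes> x \<otimes> cx \<noteq> cy \<otimes> (y \<otimes> x)" "y \<otimes> x \<otimes> cx \<noteq> cx \<otimes> (x \<otimes> y) \<otimes> cy"
    "y \<otimes> x \<otimes> cx \<noteq> cy \<otimes> (y \<otimes> x) \<otimes> cx"
    using yx_cx_eq_cy_yx_iff ne by (simp_all flip: tw)
  then have rel: "\<sigma> x + (if y \<otimes> x \<otimes> cx = x \<otimes> y \<otimes> cy then \<sigma> y else 0)
      + (if y \<otimes> x \<otimes> cx = cx \<otimes> (x \<otimes> y) then \<sigma> x else 0) = 0"
    using coefficient_relation[of "y \<otimes> x \<otimes> cx"] hc by (simp add: algebra_simps)
  have "y \<otimes> x \<otimes> cx \<noteq> cx \<otimes> (x \<otimes> y)"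
  proof
    assume h: "y \<otimes> x \<otimes> cx = cx \<otimes> (x \<otimes> y)"
    then have "y \<otimes> x \<otimes> cx \<noteq> x \<otimes> y \<otimes> cy"
      using xy_cy_eq_cx_xy_iff ne by simp
    then show False
      using rel h \<sigma>_double_neq_zero[of x] by simp
  qed
  then show ?thesis
    using rel \<sigma>_neq_zero[of x] by (auto split: if_split_asm)
qed

lemma yx_neq_twisted:
  assumes ne: "cx \<noteq> cy" and hc: "x \<otimes> y = cy \<otimes> (y \<otimes> x)"
  shows "y \<otimes> x \<noteq> cx \<otimes> (x \<otimes> y) \<otimes> cy"
proof
  assume tw: "y \<otimes> x = cx \<otimes> (x \<otimes> y) \<otimes> cy"
  let ?g = "x \<otimes> star x"
  have g_closed: "?g \<in> carrier G"
    using star_closed by simp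
  have "y \<otimes> ?g = y \<otimes> x \<otimes> cx \<otimes> x"
    by (simp add: star_eq_cstar_mult[of x] m_assoc)
  also have "\<dots> = x \<otimes> (cy \<otimes> (y \<otimes> x))"
    using yx_cx_eq_xy_cy[OF ne hc tw] cy_commutes by (simp add: m_assoc flip: cy_commutes_left)
  also have "\<dots> = x \<otimes> (x \<otimes> y)"
    by (simp flip: hc)
  also have "\<dots> = cx \<otimes> ?g \<otimes> y"
    by (simp add: star_eq_cstar_mult[of x] m_assoc cx_commutes_left cx_square_left flip: cx_commutes)
  finally have conj: "y \<otimes> ?g = cx \<otimes> ?g \<otimes> y" .
  have "star y \<otimes> ?g = cy \<otimes> cx \<otimes> ?g \<otimes> y"
    using conj g_closed by (simp add: star_eq_cstar_mult[of y] m_assoc)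
  then have "?g \<otimes> y \<noteq> y \<otimes> ?g" "?g \<otimes> y \<noteq> star y \<otimes> ?g"
    using conj g_closed cy_mult_cx_eq_one_iff ne by simp_all
  then have "(2::'r) = 0"
    using double_delta_anticomm_at[OF g_closed double_delta_mult_star_in_S_set[OF x_closed] y_closed y_nonsym, of "?g \<otimes> y"]
      g_closed star_closed[of y]
    by (simp add: star_eq_cstar_mult[of y])
  then show False
    using two_neq_zero by simp
qed

lemma yx_eq_xy_cy:
  assumes nc: "x \<otimes> y \<noteq> y \<otimes> x" and ne: "cx \<noteq> cy" and hc: "x \<otimes> y = cy \<otimes> (y \<otimes> x)"
  shows "y \<otimes> x = x \<otimes> y \<otimes> cy"
proof (rule ccontr)
  assume h: "y \<otimes> x \<noteq> x \<otimes> y \<otimes> cy"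
  have "cx \<otimes> (x \<otimes> y) = cx \<otimes> cy \<otimes> (y \<otimes> x)"
    by (simp add: hc m_assoc)
  then have "y \<otimes> x \<noteq> cx \<otimes> (x \<otimes> y)"
    using cx_mult_cy_eq_one_iff ne by simp
  moreover have "y \<otimes> x \<noteq> cy \<otimes> (y \<otimes> x) \<otimes> cx"
    using yx_eq_twisted_iff ne by simp
  ultimately have "1 + (if y \<otimes> x = cx \<otimes> (x \<otimes> y) \<otimes> cy then \<sigma> x * \<sigma> y else 0) = 0"
    using coefficient_relation[of "y \<otimes> x"] nc h by (simp add: algebra_simps)
  then show False
    using one_neq_zero yx_neq_twisted[OF ne hc] by (auto split: if_split_asm)
qed

lemma commutator_eq_cy_case:
  assumes nc: "x \<otimes> y \<noteq> y \<otimes> x" and ne: "cx \<noteq> cy" and hc: "x \<otimes> y = cy \<otimes> (y \<otimes> x)"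
  shows "gcomm G x y = cy \<and> cy \<noteq> cx \<and> cx = cstar G star (x \<otimes> y) \<and> \<sigma> y = -1"
proof -
  have "x \<otimes> y = y \<otimes> x \<otimes> cy"
    using yx_eq_xy_cy[OF nc ne hc] cy_square by (simp add: m_assoc)
  moreover have "cstar G star (x \<otimes> y) = cx"
    using star_xy_eq_cx_xy[OF ne hc] by (simp add: cstar_eq_iff)
  moreover have "x \<otimes> y \<noteq> y \<otimes> x \<otimes> cx"
    using yx_cx_eq_cy_yx_iff ne hc by simp
  then have "1 + \<sigma> y = 0"
    using coefficient_at_xy_distinct_cstar[OF nc ne] hc by simp
  ultimately show ?thesis
    using ne by (simp add: gcomm_eq_iff eq_neg_iff_add_eq_0 add.commute)
qed

lemma noncommuting_distinct_cstar_case: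
  assumes nc: "x \<otimes> y \<noteq> y \<otimes> x" and ne: "cx \<noteq> cy"
  shows "(gcomm G x y = cx \<and> cx \<noteq> cy \<and> cy = cstar G star (x \<otimes> y) \<and> \<sigma> x = -1)
       \<or> (gcomm G x y = cy \<and> cy \<noteq> cx \<and> cx = cstar G star (x \<otimes> y) \<and> \<sigma> y = -1)"
proof -
  have "x \<otimes> y \<noteq> cy \<otimes> (y \<otimes> x) \<otimes> cx"
    using xy_not_symmetric[OF nc ne] by (simp add: star_xy)
  then have "x \<otimes> y = y \<otimes> x \<otimes> cx \<or> x \<otimes> y = cy \<otimes> (y \<otimes> x)"
    using coefficient_at_xy_distinct_cstar[OF nc ne] one_neq_zero by (auto split: if_split_asm)
  then show ?thesis
    using commutator_eq_cx_case[OF nc ne] commutator_eq_cy_case[OF nc ne] by blast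
qed

end

theorem lemma3p13:
  fixes G :: "('g, 'm) monoid_scheme" and star :: "'g \<Rightarrow> 'g"
    and \<sigma> :: "'g \<Rightarrow> 'r::comm_ring_1" and x y :: 'g
  assumes grp: "group G"
    and charR: "CHAR('r) \<noteq> 2"
    and star_closed: "\<forall>a\<in>carrier G. star a \<in> carrier G"
    and star_mult: "\<forall>a\<in>carrier G. \<forall>b\<in>carrier G. star (a \<otimes>\<^bsub>G\<^esub> b) = star b \<otimes>\<^bsub>G\<^esub> star a"
    and star_star: "\<forall>a\<in>carrier G. star (star a) = a"
    and \<sigma>_unit: "\<forall>a\<in>carrier G. \<sigma> a dvd 1"
    and \<sigma>_hom: "\<forall>a\<in>carrier G. \<forall>b\<in>carrier G. \<sigma> (a \<otimes>\<^bsub>G\<^esub> b) = \<sigma> a * \<sigma> b"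
    and \<sigma>_nontriv: "\<exists>a\<in>carrier G. \<sigma> a \<noteq> 1"
    and \<sigma>_compat: "\<forall>a\<in>carrier G. \<sigma> (a \<otimes>\<^bsub>G\<^esub> star a) = 1"
    and anti: "S_anticomm G star \<sigma>"
    and x: "x \<in> carrier G" "star x \<noteq> x"
    and y: "y \<in> carrier G" "star y \<noteq> y"
  shows "(gcomm G x y = \<one>\<^bsub>G\<^esub> \<longrightarrow>
            cstar G star x = cstar G star y
          \<and> 2 * (1 + \<sigma> (x \<otimes>\<^bsub>G\<^esub> y)) = 0
          \<and> 2 * (\<sigma> x + \<sigma> y) = 0)
       \<and> (gcomm G x y \<noteq> \<one>\<^bsub>G\<^esub> \<longrightarrow>
            (gcomm G x y = cstar G star x \<and> cstar G star x = cstar G star y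
               \<and> cstar G star y = cstar G star (x \<otimes>\<^bsub>G\<^esub> y)
               \<and> 1 + \<sigma> x + \<sigma> y + \<sigma> (x \<otimes>\<^bsub>G\<^esub> y) = 0)
          \<or> (gcomm G x y = cstar G star x \<and> cstar G star x \<noteq> cstar G star y
               \<and> cstar G star y = cstar G star (x \<otimes>\<^bsub>G\<^esub> y) \<and> \<sigma> x = -1)
          \<or> (gcomm G x y = cstar G star y \<and> cstar G star y \<noteq> cstar G star x
               \<and> cstar G star x = cstar G star (x \<otimes>\<^bsub>G\<^esub> y) \<and> \<sigma> y = -1)
          \<or> (gcomm G x y = cstar G star (x \<otimes>\<^bsub>G\<^esub> y)
               \<and> cstar G star (x \<otimes>\<^bsub>G\<^esub> y) \<noteq> cstar G star x
               \<and> cstar G star x = cstar G star y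
               \<and> \<sigma> (x \<otimes>\<^bsub>G\<^esub> y) = -1 \<and> \<sigma> x = - \<sigma> y))"
proof -
  interpret nonsymmetric_pair G star \<sigma> x y
    using assms
    by (intro nonsymmetric_pair.intro anticommutative_S.intro anticommutative_S_axioms.intro
        nonsymmetric_pair_axioms.intro) auto
  have "gcomm G x y = \<one>\<^bsub>G\<^esub> \<longleftrightarrow> x \<otimes>\<^bsub>G\<^esub> y = y \<otimes>\<^bsub>G\<^esub> x"
    by (simp add: gcomm_eq_iff)
  then show ?thesis
    using commuting_case noncommuting_equal_cstar_case noncommuting_distinct_cstar_case by blast
qed

end
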